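(* Let $k>1$ and let $f$ be a positive function, differentiable on $[0,1]$. Consider the planar system $$\frac{dI}{d\tau}=I\,[f(R)(1-I-R)-k],\qquad \frac{dR}{d\tau}=(k-1)I-R,$$ and let $(I^*,R^* )$ be an endemic equilibrium point of it such that $\frac{df}{dR}(R^* )\le 0$. Then $(I^*,R^* )$ is locally stable.
   Context: An endemic equilibrium is an equilibrium point $(I^*,R^* )$ of the system with $I^*>0$. "Locally stable" means locally asymptotically stable (both eigenvalues of the Jacobian at the point have negative real part). *)

theory Defs
  imports "HOL-Analysis.Analysis"
begin

definition field_I :: "(real \<Rightarrow> real) \<Rightarrow> real \<Rightarrow> real \<Rightarrow> real \<Rightarrow> real" where
  "field_I f k I R = I * (f R * (1 - I - R) - k)"

definition field_R :: "real \<Rightarrow> real \<Rightarrow> real \<Rightarrow> real" where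
  "field_R k I R = (k - 1) * I - R"

text \<open>Equilibrium point of the system (lying in the domain R in [0,1] of f).\<close>

definition is_equilibrium :: "(real \<Rightarrow> real) \<Rightarrow> real \<Rightarrow> real \<Rightarrow> real \<Rightarrow> bool" where
  "is_equilibrium f k I R \<longleftrightarrow> R \<in> {0..1} \<and> field_I f k I R = 0 \<and> field_R k I R = 0"

definition is_endemic_equilibrium :: "(real \<Rightarrow> real) \<Rightarrow> real \<Rightarrow> real \<Rightarrow> real \<Rightarrow> bool" where
  "is_endemic_equilibrium f k I R \<longleftrightarrow> is_equilibrium f k I R \<and> I > 0"

definition jac11 :: "(real \<Rightarrow> real) \<Rightarrow> real \<Rightarrow> real \<Rightarrow> real \<Rightarrow> real" where
  "jac11 f k I R = deriv (\<lambda>x. field_I f k x R) I"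
definition jac12 :: "(real \<Rightarrow> real) \<Rightarrow> real \<Rightarrow> real \<Rightarrow> real \<Rightarrow> real" where
  "jac12 f k I R = deriv (\<lambda>y. field_I f k I y) R"
definition jac21 :: "real \<Rightarrow> real \<Rightarrow> real \<Rightarrow> real" where
  "jac21 k I R = deriv (\<lambda>x. field_R k x R) I"
definition jac22 :: "real \<Rightarrow> real \<Rightarrow> real \<Rightarrow> real" where
  "jac22 k I R = deriv (\<lambda>y. field_R k I y) R"

definition jac_eigenvalue :: "(real \<Rightarrow> real) \<Rightarrow> real \<Rightarrow> real \<Rightarrow> real \<Rightarrow> complex \<Rightarrow> bool" where
  "jac_eigenvalue f k I R \<mu> \<longleftrightarrow>
     (of_real (jac11 f k I R) - \<mu>) * (of_real (jac22 k I R) - \<mu>)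
       - of_real (jac12 f k I R) * of_real (jac21 k I R) = 0"

definition locally_stable :: "(real \<Rightarrow> real) \<Rightarrow> real \<Rightarrow> real \<Rightarrow> real \<Rightarrow> bool" where
  "locally_stable f k I R \<longleftrightarrow> (\<forall>\<mu>. jac_eigenvalue f k I R \<mu> \<longrightarrow> Re \<mu> < 0)"

end

theory Submission
  imports Defs
begin

text \<open>At an endemic equilibrium the relation f(R)(1 - I - R) = k reduces the Jacobian to
  J = [[-f(R) I, I (f'(R)(1 - I - R) - f(R))], [k - 1, -1]]. Its trace -f(R) I - 1 is negative, and
  its determinant f(R) I + (k - 1) I (f(R) - f'(R)(1 - I - R)) is positive because f'(R) \<le> 0 and
  1 - I - R > 0. A real 2x2 matrix with negative trace and positive determinant has both
  eigenvalues in the open left half plane.\<close>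

lemma Re_root_neg_if_trace_neg_det_pos:
  fixes a b c e :: real and \<mu> :: complex
  assumes trace: "a + c < 0" and det: "a * c - b * e > 0"
    and root: "(of_real a - \<mu>) * (of_real c - \<mu>) - of_real b * of_real e = 0"
  shows "Re \<mu> < 0"
proof -
  obtain x y where \<mu>: "\<mu> = Complex x y" by (cases \<mu>)
  from root have re: "x * x - y * y - (a + c) * x + (a * c - b * e) = 0"
    and im: "y * (2 * x - (a + c)) = 0"
    by (auto simp: \<mu> complex_eq_iff algebra_simps)
  consider "y = 0" | "2 * x = a + c" using im by auto
  then show ?thesis
  proof cases
    case 1
    have "x * x - (a + c) * x + (a * c - b * e) > 0" if "x \<ge> 0"
      using that trace det by (smt (verit) mult_nonneg_nonneg mult_nonpos_nonneg)
    then show ?thesis using re 1 \<mu> by force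
  next
    case 2
    then show ?thesis using trace \<mu> by simp
  qed
qed

lemma endemic_equilibrium_bounds:
  assumes "k > 1" and f_pos: "\<forall>x\<in>{0..1}. f x > 0" and "is_endemic_equilibrium f k I R"
  shows "I > 0" "R > 0" "R < 1" "f R > 0" "f R * (1 - I - R) = k" "1 - I - R > 0"
proof -
  have R01: "R \<in> {0..1}" and eq_I: "I * (f R * (1 - I - R) - k) = 0"
    and eq_R: "(k - 1) * I - R = 0" and I_pos: "I > 0"
    using assms(3)
    by (auto simp: is_endemic_equilibrium_def is_equilibrium_def field_I_def field_R_def)
  show "I > 0" using I_pos .
  show fR: "f R > 0" using f_pos R01 by blast
  show balance: "f R * (1 - I - R) = k" using eq_I I_pos by simp
  show "1 - I - R > 0"
  proof (rule ccontr)
    assume "\<not> 1 - I - R > 0"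
    then have "f R * (1 - I - R) \<le> 0" using fR by (simp add: mult_nonneg_nonpos)
    then show False using balance \<open>k > 1\<close> by simp
  qed
  then show "R < 1" using I_pos by simp
  have "(k - 1) * I > 0" using I_pos \<open>k > 1\<close> by simp
  then show "0 < R" using eq_R by simp
qed

lemma jacobian_entries:
  assumes "(f has_real_derivative f') (at R)"
  shows "jac11 f k I R = f R * (1 - I - R) - k - f R * I"
    and "jac12 f k I R = I * (f' * (1 - I - R) - f R)"
    and "jac21 k I R = k - 1"
    and "jac22 k I R = -1"
proof -
  have "((\<lambda>x. x * (f R * (1 - x - R) - k)) has_real_derivative
      f R * (1 - I - R) - k - f R * I) (at I)"
    by (auto intro!: derivative_eq_intros simp: algebra_simps)
  then show "jac11 f k I R = f R * (1 - I - R) - k - f R * I"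
    unfolding jac11_def field_I_def by (rule DERIV_imp_deriv)
  have "((\<lambda>y. I * (f y * (1 - I - y) - k)) has_real_derivative
      I * (f' * (1 - I - R) - f R)) (at R)"
    using assms by (auto intro!: derivative_eq_intros simp: algebra_simps)
  then show "jac12 f k I R = I * (f' * (1 - I - R) - f R)"
    unfolding jac12_def field_I_def by (rule DERIV_imp_deriv)
  show "jac21 k I R = k - 1" "jac22 k I R = -1"
    unfolding jac21_def jac22_def field_R_def
    by (rule DERIV_imp_deriv, auto intro!: derivative_eq_intros)+
qed

theorem corollary1:
  fixes f :: "real \<Rightarrow> real" and k Is Rs :: real
  assumes "k > 1"
    and "\<forall>x\<in>{0..1}. f x > 0"
    and "f differentiable_on {0..1}"
    and "is_endemic_equilibrium f k Is Rs"
    and "deriv f Rs \<le> 0"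
  shows "locally_stable f k Is Rs"
proof -
  note eq = endemic_equilibrium_bounds[OF assms(1,2,4)]
  have "Rs \<in> interior {0..1}" using eq(2,3) by simp
  then have "f differentiable (at Rs)"
    using assms(3) by (metis at_within_interior differentiable_on_def interior_subset subsetD)
  then have J: "jac11 f k Is Rs = - f Rs * Is"
    "jac12 f k Is Rs = Is * (deriv f Rs * (1 - Is - Rs) - f Rs)"
    "jac21 k Is Rs = k - 1" "jac22 k Is Rs = -1"
    using jacobian_entries[of f "deriv f Rs" Rs k Is] eq(5)
    by (simp_all add: DERIV_deriv_iff_real_differentiable)
  have "deriv f Rs * (1 - Is - Rs) - f Rs < 0"
    using assms(5) eq(4,6) by (smt (verit) mult_nonpos_nonneg)
  then have "jac12 f k Is Rs * jac21 k Is Rs < 0"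
    unfolding J using eq(1) assms(1) by (simp add: mult_pos_neg mult_neg_pos)
  moreover have "f Rs * Is > 0" using eq(1,4) by simp
  ultimately have "jac11 f k Is Rs + jac22 k Is Rs < 0"
    and "jac11 f k Is Rs * jac22 k Is Rs - jac12 f k Is Rs * jac21 k Is Rs > 0"
    unfolding J(1,4) by simp_all
  then show ?thesis
    unfolding locally_stable_def jac_eigenvalue_def
    using Re_root_neg_if_trace_neg_det_pos by blast
qed

end
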